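(* Let $G$ be a connected graph with $n$ vertices and $m$ edges. If $m\ge 2n^{3/2}$, then $\frac{q(G)}{R(G)}<\frac{n}{\sqrt{n-1}}$.
   Context: All graphs are finite and simple. For a vertex $u$, $d(u)$ is its degree. The Randić index is $R(G)=\sum_{\{u,v\}\in E(G)} \frac{1}{\sqrt{d(u)d(v)}}$. The signless Laplacian is $Q=D+A$ ($D$ the diagonal degree matrix, $A$ the adjacency matrix), and $q(G)$ is its largest eigenvalue. *)

theory Defs
  imports "HOL-Analysis.Analysis"
begin

definition simple_graph :: "'a set \<Rightarrow> 'a set set \<Rightarrow> bool" where
  "simple_graph V E \<longleftrightarrow> finite V \<and> (\<forall>e\<in>E. \<exists>u v. u \<in> V \<and> v \<in> V \<and> u \<noteq> v \<and> e = {u, v})"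

definition adj :: "'a set set \<Rightarrow> 'a \<Rightarrow> 'a \<Rightarrow> bool" where
  "adj E u v \<longleftrightarrow> {u, v} \<in> E"

definition connected_graph :: "'a set \<Rightarrow> 'a set set \<Rightarrow> bool" where
  "connected_graph V E \<longleftrightarrow> V \<noteq> {} \<and>
     (\<forall>u\<in>V. \<forall>v\<in>V. (u, v) \<in> {(x, y). adj E x y}\<^sup>*)"

definition degree :: "'a set \<Rightarrow> 'a set set \<Rightarrow> 'a \<Rightarrow> nat" where
  "degree V E u = card {v \<in> V. adj E u v}"

definition randic :: "'a set \<Rightarrow> 'a set set \<Rightarrow> real" where
  "randic V E = (\<Sum>e\<in>E. (THE r. \<exists>u v. e = {u, v} \<and> u \<noteq> v \<and>
        r = 1 / sqrt (real (degree V E u) * real (degree V E v))))"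

definition signless_laplacian :: "'a set \<Rightarrow> 'a set set \<Rightarrow> 'a \<Rightarrow> 'a \<Rightarrow> real" where
  "signless_laplacian V E u w =
     (if u = w then real (degree V E u) else 0) + (if adj E u w then 1 else 0)"

definition is_Q_eigenvalue :: "'a set \<Rightarrow> 'a set set \<Rightarrow> real \<Rightarrow> bool" where
  "is_Q_eigenvalue V E lam \<longleftrightarrow> (\<exists>x :: 'a \<Rightarrow> real. (\<exists>v\<in>V. x v \<noteq> 0) \<and>
     (\<forall>u\<in>V. (\<Sum>w\<in>V. signless_laplacian V E u w * x w) = lam * x u))"

text \<open>q(G): the largest eigenvalue of Q (Q is real symmetric, so all eigenvalues are real).\<close>
definition q_index :: "'a set \<Rightarrow> 'a set set \<Rightarrow> real" where
  "q_index V E = Max {lam. is_Q_eigenvalue V E lam}"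

end

theory Submission
  imports Defs "Jordan_Normal_Form.Spectral_Radius"
begin

text \<open>
  Every eigenvalue of \<open>Q\<close> is bounded in modulus by the largest row sum of \<open>\<bar>Q\<bar>\<close>, which is
  \<open>2 d(u) \<le> 2(n - 1)\<close>; so \<open>q(G) \<le> 2(n - 1)\<close>. Every edge contributes at least \<open>1/(n - 1)\<close> to
  \<open>R(G)\<close>, so \<open>R(G) \<ge> m/(n - 1)\<close>. Hence \<open>q/R \<le> 2(n - 1)\<^sup>2/m \<le> (n - 1)\<^sup>2/n powr (3/2) < n/\<surd>(n - 1)\<close>.
  The one non-elementary point is that \<open>q(G)\<close>, a maximum over the eigenvalues, is attained:
  a real symmetric matrix has finitely many eigenvalues and at least one real one.
\<close>

definition eigenvalue_on :: "'a set \<Rightarrow> ('a \<Rightarrow> 'a \<Rightarrow> 'b::comm_ring_1) \<Rightarrow> 'b \<Rightarrow> bool" where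
  "eigenvalue_on V M k \<longleftrightarrow> (\<exists>x. (\<exists>v\<in>V. x v \<noteq> 0) \<and> (\<forall>u\<in>V. (\<Sum>w\<in>V. M u w * x w) = k * x u))"

lemma is_Q_eigenvalue_iff: "is_Q_eigenvalue V E lam \<longleftrightarrow> eigenvalue_on V (signless_laplacian V E) lam"
  unfolding is_Q_eigenvalue_def eigenvalue_on_def ..

lemma eigenvalue_on_iff_eigenvalue_mat:
  fixes M :: "'a \<Rightarrow> 'a \<Rightarrow> 'b::comm_ring_1"
  assumes f: "bij_betw f {0..<n} V"
  shows "eigenvalue_on V M k \<longleftrightarrow> eigenvalue (mat n n (\<lambda>(i, j). M (f i) (f j))) k"
proof -
  define A where "A = mat n n (\<lambda>(i, j). M (f i) (f j))"
  have A: "A \<in> carrier_mat n n"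
    by (simp add: A_def)
  define g where "g = the_inv_into {0..<n} f"
  have gf: "g (f i) = i" if "i < n" for i
    using f that unfolding g_def bij_betw_def by (simp add: the_inv_into_f_f)
  have g: "bij_betw g V {0..<n}"
    using f unfolding g_def by (rule bij_betw_the_inv_into)
  have fg: "f (g u) = u" "g u < n" if "u \<in> V" for u
    using f g that unfolding g_def by (auto simp: f_the_inv_into_f_bij_betw dest: bij_betwE)
  have fV: "f i \<in> V" if "i < n" for i
    using f that by (auto dest: bij_betwE)
  have reindex: "(\<Sum>w\<in>V. h w) = (\<Sum>j<n. h (f j))" for h :: "'a \<Rightarrow> 'b"
    using sum.reindex_bij_betw[OF f, of h] by (simp add: atLeast0LessThan)
  have mult_A: "(A *\<^sub>v y) $ i = (\<Sum>w\<in>V. M (f i) w * y $ g w)"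
    if "y \<in> carrier_vec n" "i < n" for y i
    using that by (simp add: A_def scalar_prod_def reindex gf atLeast0LessThan)
  show ?thesis
    unfolding A_def[symmetric]
  proof
    assume "eigenvalue_on V M k"
    then obtain x v where v: "v \<in> V" "x v \<noteq> 0" and x: "\<forall>u\<in>V. (\<Sum>w\<in>V. M u w * x w) = k * x u"
      unfolding eigenvalue_on_def by blast
    define y where "y = vec n (\<lambda>i. x (f i))"
    have y: "y \<in> carrier_vec n" by (simp add: y_def)
    have "y $ g v \<noteq> 0" using v fg by (simp add: y_def)
    then have y0: "y \<noteq> 0\<^sub>v n" using fg(2)[OF v(1)] by auto
    have "(A *\<^sub>v y) $ i = k * y $ i" if "i < n" for i
    proof -
      have "(A *\<^sub>v y) $ i = (\<Sum>w\<in>V. M (f i) w * y $ g w)"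
        by (rule mult_A[OF y that])
      also have "\<dots> = (\<Sum>w\<in>V. M (f i) w * x w)"
        by (rule sum.cong) (simp_all add: y_def fg)
      also have "\<dots> = k * y $ i"
        using that fV x by (simp add: y_def)
      finally show ?thesis .
    qed
    then have "A *\<^sub>v y = k \<cdot>\<^sub>v y"
      using y A by (intro eq_vecI) auto
    then show "eigenvalue A k"
      using y y0 by (auto simp: eigenvalue_def eigenvector_def A_def)
  next
    assume "eigenvalue A k"
    then obtain y where y: "y \<in> carrier_vec n" "y \<noteq> 0\<^sub>v n" and Ay: "A *\<^sub>v y = k \<cdot>\<^sub>v y"
      by (auto simp: eigenvalue_def eigenvector_def A_def)
    obtain i where i: "i < n" "y $ i \<noteq> 0"
    proof (rule ccontr)
      assume "\<not> thesis"
      then have "y = 0\<^sub>v n"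
        using y(1) that by (intro eq_vecI) auto
      with y(2) show False ..
    qed
    have "(\<Sum>w\<in>V. M u w * y $ g w) = k * y $ g u" if u: "u \<in> V" for u
    proof -
      have "(\<Sum>w\<in>V. M u w * y $ g w) = (A *\<^sub>v y) $ g u"
        using mult_A[OF y(1) fg(2)[OF u]] fg(1)[OF u] by simp
      also have "\<dots> = k * y $ g u"
        using Ay fg(2)[OF u] y(1) by simp
      finally show ?thesis .
    qed
    moreover have "y $ g (f i) \<noteq> 0"
      using i gf by simp
    ultimately show "eigenvalue_on V M k"
      unfolding eigenvalue_on_def using fV[OF i(1)] by (intro exI[of _ "\<lambda>w. y $ g w"]) blast
  qed
qed

lemma finite_eigenvalues_on:
  fixes M :: "'a \<Rightarrow> 'a \<Rightarrow> 'b::field"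
  assumes "finite V"
  shows "finite {k. eigenvalue_on V M k}"
proof -
  obtain f where f: "bij_betw f {0..<card V} V"
    using ex_bij_betw_nat_finite[OF assms] by blast
  show ?thesis
    using card_finite_spectrum(1)[of "mat (card V) (card V) (\<lambda>(i, j). M (f i) (f j))" "card V"]
    by (simp add: eigenvalue_on_iff_eigenvalue_mat[OF f] spectrum_def)
qed

lemma ex_complex_eigenvalue_on:
  fixes M :: "'a \<Rightarrow> 'a \<Rightarrow> complex"
  assumes "finite V" "V \<noteq> {}"
  shows "\<exists>k. eigenvalue_on V M k"
proof -
  obtain f where f: "bij_betw f {0..<card V} V"
    using ex_bij_betw_nat_finite[OF assms(1)] by blast
  show ?thesis
    using spectrum_non_empty[of "mat (card V) (card V) (\<lambda>(i, j). M (f i) (f j))" "card V"] assms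
    by (auto simp: eigenvalue_on_iff_eigenvalue_mat[OF f] spectrum_def card_gt_0_iff)
qed

lemma eigenvalue_on_symmetric_Im_eq_0:
  fixes M :: "'a \<Rightarrow> 'a \<Rightarrow> real"
  assumes "finite V" and sym: "\<forall>u\<in>V. \<forall>w\<in>V. M u w = M w u"
    and "eigenvalue_on V (\<lambda>u w. complex_of_real (M u w)) k"
  shows "Im k = 0"
proof -
  obtain z v where v: "v \<in> V" "z v \<noteq> 0"
    and z: "\<forall>u\<in>V. (\<Sum>w\<in>V. complex_of_real (M u w) * z w) = k * z u"
    using assms(3) unfolding eigenvalue_on_def by blast
  define N where "N = (\<Sum>u\<in>V. (cmod (z u))\<^sup>2)"
  define s where "s = (\<Sum>u\<in>V. \<Sum>w\<in>V. complex_of_real (M u w) * (cnj (z u) * z w))"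
  have "N \<ge> (cmod (z v))\<^sup>2"
    unfolding N_def using v(1) assms(1) by (intro member_le_sum) auto
  moreover have "(cmod (z v))\<^sup>2 > 0"
    using v(2) by simp
  ultimately have N: "N > 0"
    by linarith
  \<comment> \<open>The Hermitian form \<open>z\<^sup>* M z\<close> equals \<open>k \<parallel>z\<parallel>\<^sup>2\<close> and is real because \<open>M\<close> is real symmetric.\<close>
  have "s = (\<Sum>u\<in>V. cnj (z u) * (\<Sum>w\<in>V. complex_of_real (M u w) * z w))"
    unfolding s_def by (simp add: sum_distrib_left mult.left_commute)
  also have "\<dots> = (\<Sum>u\<in>V. cnj (z u) * (k * z u))"
    using z by simp
  also have "\<dots> = k * complex_of_real N"
    unfolding N_def of_real_sum sum_distrib_left complex_norm_square by (simp add: mult_ac)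
  finally have s_eq: "s = k * complex_of_real N" .
  have "cnj s = (\<Sum>u\<in>V. \<Sum>w\<in>V. complex_of_real (M u w) * (z u * cnj (z w)))"
    unfolding s_def by simp
  also have "\<dots> = (\<Sum>w\<in>V. \<Sum>u\<in>V. complex_of_real (M u w) * (z u * cnj (z w)))"
    by (rule sum.swap)
  also have "\<dots> = s"
    unfolding s_def using sym by (intro sum.cong refl) (simp add: mult.commute)
  finally have "Im s = 0"
    by (simp add: complex_eq_iff)
  then show ?thesis
    using s_eq N by simp
qed

lemma eigenvalue_on_of_realD:
  fixes M :: "'a \<Rightarrow> 'a \<Rightarrow> real"
  assumes "eigenvalue_on V (\<lambda>u w. complex_of_real (M u w)) (complex_of_real lam)"
  shows "eigenvalue_on V M lam"
proof -
  obtain z v where v: "v \<in> V" "z v \<noteq> 0"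
    and z: "\<forall>u\<in>V. (\<Sum>w\<in>V. complex_of_real (M u w) * z w) = complex_of_real lam * z u"
    using assms unfolding eigenvalue_on_def by blast
  have Re: "(\<Sum>w\<in>V. M u w * Re (z w)) = lam * Re (z u)"
   and Im: "(\<Sum>w\<in>V. M u w * Im (z w)) = lam * Im (z u)" if "u \<in> V" for u
    using arg_cong[OF z[rule_format, OF that], of Re] arg_cong[OF z[rule_format, OF that], of Im]
    by (simp_all add: Re_sum Im_sum)
  consider "Re (z v) \<noteq> 0" | "Im (z v) \<noteq> 0"
    using v(2) complex_eq_iff by force
  then show ?thesis
  proof cases
    case 1
    then show ?thesis
      unfolding eigenvalue_on_def using v(1) Re by (intro exI[of _ "\<lambda>w. Re (z w)"]) blast
  next
    case 2
    then show ?thesis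
      unfolding eigenvalue_on_def using v(1) Im by (intro exI[of _ "\<lambda>w. Im (z w)"]) blast
  qed
qed

lemma ex_eigenvalue_on_symmetric:
  fixes M :: "'a \<Rightarrow> 'a \<Rightarrow> real"
  assumes "finite V" "V \<noteq> {}" "\<forall>u\<in>V. \<forall>w\<in>V. M u w = M w u"
  shows "\<exists>lam. eigenvalue_on V M lam"
proof -
  obtain k where k: "eigenvalue_on V (\<lambda>u w. complex_of_real (M u w)) k"
    using ex_complex_eigenvalue_on[OF assms(1,2)] by blast
  then have "k = complex_of_real (Re k)"
    using eigenvalue_on_symmetric_Im_eq_0[OF assms(1,3)] by (simp add: complex_eq_iff)
  with k have "eigenvalue_on V (\<lambda>u w. complex_of_real (M u w)) (complex_of_real (Re k))"
    by simp
  then show ?thesis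
    by (blast dest: eigenvalue_on_of_realD)
qed

lemma eigenvalue_on_abs_le_row_sum:
  fixes M :: "'a \<Rightarrow> 'a \<Rightarrow> real"
  assumes "finite V" "eigenvalue_on V M lam" and B: "\<forall>u\<in>V. (\<Sum>w\<in>V. \<bar>M u w\<bar>) \<le> B"
  shows "\<bar>lam\<bar> \<le> B"
proof -
  obtain x v where v: "v \<in> V" "x v \<noteq> 0" and x: "\<forall>u\<in>V. (\<Sum>w\<in>V. M u w * x w) = lam * x u"
    using assms(2) unfolding eigenvalue_on_def by blast
  \<comment> \<open>Read off the eigen-equation at a coordinate of maximal modulus.\<close>
  have "Max ((\<lambda>w. \<bar>x w\<bar>) ` V) \<in> (\<lambda>w. \<bar>x w\<bar>) ` V"
    using assms(1) v(1) by (intro Max_in) auto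
  then obtain u where u: "u \<in> V" "\<bar>x u\<bar> = Max ((\<lambda>w. \<bar>x w\<bar>) ` V)"
    by (metis imageE)
  have max: "\<bar>x w\<bar> \<le> \<bar>x u\<bar>" if "w \<in> V" for w
    using u(2) assms(1) that by simp
  have "\<bar>lam\<bar> * \<bar>x u\<bar> = \<bar>\<Sum>w\<in>V. M u w * x w\<bar>"
    using x u(1) by (simp add: abs_mult)
  also have "\<dots> \<le> (\<Sum>w\<in>V. \<bar>M u w\<bar> * \<bar>x w\<bar>)"
    using sum_abs[of "\<lambda>w. M u w * x w" V] by (simp add: abs_mult)
  also have "\<dots> \<le> (\<Sum>w\<in>V. \<bar>M u w\<bar> * \<bar>x u\<bar>)"
    using max by (intro sum_mono mult_left_mono) auto
  also have "\<dots> \<le> B * \<bar>x u\<bar>"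
    using B u(1) by (simp add: sum_distrib_right[symmetric] mult_right_mono)
  finally have "\<bar>lam\<bar> * \<bar>x u\<bar> \<le> B * \<bar>x u\<bar>" .
  moreover have "\<bar>x u\<bar> > 0"
    using max[OF v(1)] v(2) by linarith
  ultimately show ?thesis
    by (rule mult_right_le_imp_le)
qed

lemma simple_graph_not_adj_self:
  assumes "simple_graph V E"
  shows "\<not> adj E u u"
proof
  assume "adj E u u"
  then obtain a b where "a \<noteq> b" "{u} = {a, b}"
    using assms unfolding simple_graph_def adj_def by auto
  moreover from this(2) have "a = u" "b = u"
    by (simp_all add: doubleton_eq_iff)
  ultimately show False
    by simp
qed

lemma degree_less_card:
  assumes "simple_graph V E" "u \<in> V"
  shows "degree V E u < card V"
proof -
  have "finite V"
    using assms(1) by (simp add: simple_graph_def)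
  moreover have "{w \<in> V. adj E u w} \<subset> V"
    using assms(2) simple_graph_not_adj_self[OF assms(1), of u] by auto
  ultimately show ?thesis
    unfolding degree_def by (rule psubset_card_mono)
qed

lemma degree_le_card_minus_1:
  assumes "simple_graph V E" "u \<in> V"
  shows "real (degree V E u) \<le> real (card V) - 1"
proof -
  have "degree V E u + 1 \<le> card V"
    using degree_less_card[OF assms] by simp
  then have "real (degree V E u + 1) \<le> real (card V)"
    by (rule of_nat_mono)
  then show ?thesis
    by simp
qed

lemma card_vertices_ge_2:
  assumes "simple_graph V E" "E \<noteq> {}"
  shows "2 \<le> card V"
proof -
  obtain u v where "u \<in> V" "v \<in> V" "u \<noteq> v"
    using assms unfolding simple_graph_def by blast
  then have "card {u, v} \<le> card V"
    using assms(1) by (intro card_mono) (auto simp: simple_graph_def)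
  with \<open>u \<noteq> v\<close> show ?thesis
    by simp
qed

lemma signless_laplacian_symmetric: "signless_laplacian V E u w = signless_laplacian V E w u"
  unfolding signless_laplacian_def adj_def by (auto simp: insert_commute)

lemma signless_laplacian_row_sum:
  assumes "simple_graph V E" "u \<in> V"
  shows "(\<Sum>w\<in>V. \<bar>signless_laplacian V E u w\<bar>) = 2 * real (degree V E u)"
proof -
  have fin: "finite V"
    using assms(1) by (simp add: simple_graph_def)
  have "(\<Sum>w\<in>V. \<bar>signless_laplacian V E u w\<bar>)
      = (\<Sum>w\<in>V. if u = w then real (degree V E u) else 0) + (\<Sum>w\<in>V. if adj E u w then 1 else 0)"
    unfolding signless_laplacian_def sum.distrib[symmetric] by (intro sum.cong) auto
  also have "(\<Sum>w\<in>V. if adj E u w then 1 else 0) = real (degree V E u)"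
    unfolding degree_def using fin by (simp add: sum.inter_filter[symmetric])
  finally show ?thesis
    using fin assms(2) by simp
qed

lemma q_index_le:
  assumes "simple_graph V E" "V \<noteq> {}"
  shows "q_index V E \<le> 2 * (real (card V) - 1)"
proof -
  have fin: "finite V"
    using assms(1) by (simp add: simple_graph_def)
  let ?S = "{lam. eigenvalue_on V (signless_laplacian V E) lam}"
  have "finite ?S"
    using finite_eigenvalues_on[OF fin] .
  moreover have "\<exists>lam. eigenvalue_on V (signless_laplacian V E) lam"
    by (rule ex_eigenvalue_on_symmetric[OF fin assms(2)]) (blast intro: signless_laplacian_symmetric)
  then have "?S \<noteq> {}"
    by blast
  \<comment> \<open>\<open>Max\<close> in \<open>q_index\<close> is meaningful only because the spectrum is finite and nonempty.\<close>
  ultimately have "eigenvalue_on V (signless_laplacian V E) (q_index V E)"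
    unfolding q_index_def is_Q_eigenvalue_iff using Max_in by blast
  moreover have "\<forall>u\<in>V. (\<Sum>w\<in>V. \<bar>signless_laplacian V E u w\<bar>) \<le> 2 * (real (card V) - 1)"
  proof
    fix u assume u: "u \<in> V"
    show "(\<Sum>w\<in>V. \<bar>signless_laplacian V E u w\<bar>) \<le> 2 * (real (card V) - 1)"
      using signless_laplacian_row_sum[OF assms(1) u] degree_le_card_minus_1[OF assms(1) u] by simp
  qed
  ultimately have "\<bar>q_index V E\<bar> \<le> 2 * (real (card V) - 1)"
    by (rule eigenvalue_on_abs_le_row_sum[OF fin])
  then show ?thesis
    by simp
qed

lemma randic_edge_weight:
  assumes "u \<noteq> v"
  shows "(THE r. \<exists>a b. {u, v} = {a, b} \<and> a \<noteq> b \<and>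
            r = 1 / sqrt (real (degree V E a) * real (degree V E b)))
         = 1 / sqrt (real (degree V E u) * real (degree V E v))"
proof (rule the_equality)
  fix r
  assume "\<exists>a b. {u, v} = {a, b} \<and> a \<noteq> b \<and> r = 1 / sqrt (real (degree V E a) * real (degree V E b))"
  then show "r = 1 / sqrt (real (degree V E u) * real (degree V E v))"
    by (auto simp: doubleton_eq_iff mult.commute)
qed (use assms in blast)

lemma degree_pos:
  assumes "simple_graph V E" "{u, v} \<in> E" "v \<in> V"
  shows "0 < degree V E u"
proof -
  have "v \<in> {w \<in> V. adj E u w}"
    using assms(2,3) by (simp add: adj_def)
  then show ?thesis
    unfolding degree_def using assms(1) by (auto simp: simple_graph_def card_gt_0_iff)
qed

lemma randic_edge_weight_ge:
  assumes "simple_graph V E" "{u, v} \<in> E" "u \<in> V" "v \<in> V"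
  shows "1 / (real (card V) - 1) \<le> 1 / sqrt (real (degree V E u) * real (degree V E v))"
proof -
  have "0 < degree V E u" "0 < degree V E v"
    using degree_pos[OF assms(1,2,4)] degree_pos[OF assms(1), of v u] assms(2,3)
    by (simp_all add: insert_commute)
  then have pos: "0 < real (degree V E u) * real (degree V E v)"
    by simp
  have n: "real (card V) - 1 \<ge> 1"
    using degree_le_card_minus_1[OF assms(1,3)] \<open>0 < degree V E u\<close> by linarith
  have "real (degree V E u) * real (degree V E v) \<le> (real (card V) - 1) * (real (card V) - 1)"
    using degree_le_card_minus_1[OF assms(1,3)] degree_le_card_minus_1[OF assms(1,4)] by (intro mult_mono) auto
  then have "sqrt (real (degree V E u) * real (degree V E v)) \<le> sqrt ((real (card V) - 1) * (real (card V) - 1))"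
    by (rule real_sqrt_le_mono)
  then have "sqrt (real (degree V E u) * real (degree V E v)) \<le> real (card V) - 1"
    using n by simp
  then show ?thesis
    using pos n by (intro divide_left_mono) auto
qed

lemma randic_ge_card_edges_div:
  assumes "simple_graph V E"
  shows "real (card E) / (real (card V) - 1) \<le> randic V E"
proof -
  have "real (card E) / (real (card V) - 1) = (\<Sum>e\<in>E. 1 / (real (card V) - 1))"
    by simp
  also have "\<dots> \<le> randic V E"
    unfolding randic_def
  proof (rule sum_mono)
    fix e assume "e \<in> E"
    then obtain u v where uv: "u \<in> V" "v \<in> V" "u \<noteq> v" "e = {u, v}"
      using assms unfolding simple_graph_def by blast
    show "1 / (real (card V) - 1) \<le> (THE r. \<exists>a b. e = {a, b} \<and> a \<noteq> b \<and>
            r = 1 / sqrt (real (degree V E a) * real (degree V E b)))"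
      using randic_edge_weight[OF uv(3)] randic_edge_weight_ge[OF assms _ uv(1,2)] \<open>e \<in> E\<close> uv(4)
      by simp
  qed
  finally show ?thesis .
qed

lemma q_index_div_randic_le:
  assumes "simple_graph V E" "card E > 0"
  shows "q_index V E / randic V E \<le> 2 * (real (card V) - 1)\<^sup>2 / real (card E)"
proof -
  define n where "n = real (card V)"
  define m where "m = real (card E)"
  have "E \<noteq> {}"
    using assms(2) by auto
  then have "2 \<le> card V"
    by (rule card_vertices_ge_2[OF assms(1)])
  then have V: "V \<noteq> {}" and n: "n \<ge> 2"
    unfolding n_def by auto
  have m: "m > 0"
    using assms(2) unfolding m_def by simp
  have R: "m / (n - 1) \<le> randic V E"
    using randic_ge_card_edges_div[OF assms(1)] unfolding m_def n_def .
  have "0 < m / (n - 1)"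
    using m n by simp
  then have R_pos: "0 < randic V E"
    using R by linarith
  have "q_index V E / randic V E \<le> 2 * (n - 1) / randic V E"
    using q_index_le[OF assms(1) V] R_pos unfolding n_def by (intro divide_right_mono) auto
  also have "\<dots> \<le> 2 * (n - 1) / (m / (n - 1))"
    using R R_pos m n by (intro divide_left_mono) auto
  also have "\<dots> = 2 * (n - 1)\<^sup>2 / m"
    using n by (simp add: power2_eq_square)
  finally show ?thesis
    unfolding n_def m_def .
qed

lemma sq_pred_div_powr_three_halves_less:
  fixes n :: real
  assumes "n > 1"
  shows "(n - 1)\<^sup>2 / n powr (3/2) < n / sqrt (n - 1)"
proof -
  have "n powr (3/2) = n powr (1 + 1/2)"
    by simp
  also have "\<dots> = n powr 1 * n powr (1/2)"
    by (rule powr_add)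
  also have "\<dots> = n * sqrt n"
    using assms by (simp add: powr_half_sqrt)
  finally have powr_eq: "n powr (3/2) = n * sqrt n" .
  have "(n - 1)\<^sup>2 < n * n"
    using assms by (simp add: power2_eq_square algebra_simps)
  then have "(n - 1)\<^sup>2 * sqrt (n - 1) < (n * n) * sqrt n"
    using assms by (intro mult_strict_mono) auto
  then show ?thesis
    using assms by (simp add: powr_eq divide_simps mult_ac)
qed

theorem lemma3p3:
  fixes V :: "'a set" and E :: "'a set set"
  assumes "simple_graph V E"
    and "connected_graph V E"
    and "real (card E) \<ge> 2 * real (card V) powr (3/2)"
  shows "q_index V E / randic V E < real (card V) / sqrt (real (card V) - 1)"
proof -
  define n where "n = real (card V)"
  \<comment> \<open>Connectedness is used only to exclude the empty graph.\<close>
  have "V \<noteq> {}" "finite V"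
    using assms(1,2) by (auto simp: connected_graph_def simple_graph_def)
  then have "n \<ge> 1"
    unfolding n_def by (simp add: Suc_le_eq card_gt_0_iff)
  then have "n powr (3/2) \<ge> 1"
    by (simp add: ge_one_powr_ge_zero)
  then have m: "card E > 0"
    using assms(3) unfolding n_def by simp
  then have "E \<noteq> {}"
    by auto
  then have "2 \<le> card V"
    by (rule card_vertices_ge_2[OF assms(1)])
  then have "n > 1"
    unfolding n_def by simp
  have "q_index V E / randic V E \<le> 2 * (n - 1)\<^sup>2 / real (card E)"
    using q_index_div_randic_le[OF assms(1) m] unfolding n_def .
  also have "\<dots> \<le> 2 * (n - 1)\<^sup>2 / (2 * n powr (3/2))"
    using assms(3) \<open>n > 1\<close> m unfolding n_def[symmetric] by (intro divide_left_mono) auto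
  also have "\<dots> < n / sqrt (n - 1)"
    using sq_pred_div_powr_three_halves_less[OF \<open>n > 1\<close>] by simp
  finally show ?thesis
    unfolding n_def .
qed

end
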